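(* Let $R_1,\dots,R_T:\mathcal{X}\to\mathcal{Y}^m$ be randomizers such that each shuffled protocol $\Pi_t=(R_t,S)$ is $(\varepsilon,\delta)$-differentially private in the shuffled model, and define $\widetilde R:\mathcal{X}\to\mathcal{Y}^{mT}$ by $\widetilde R(x)=(R_1(x),\dots,R_T(x))$ (independent randomness). Then for every $\delta'>0$, the composed protocol $\widetilde\Pi=(\widetilde R,S)$ is $(\varepsilon',\delta'+T\delta)$-differentially private in the shuffled model, where $\varepsilon'=\varepsilon(e^\varepsilon-1)T+\varepsilon\sqrt{2T\log(1/\delta')}$.
   Context: An algorithm $M$ on datasets $X\in\mathcal{X}^n$ is $(\varepsilon,\delta)$-differentially private if for all $X,X'$ differing in one user's entry and every output set $T$, $\Pr[M(X)\in T]\le e^\varepsilon\Pr[M(X')\in T]+\delta$. In the shuffled model with $n$ users, for a randomizer $R:\mathcal{X}\to\mathcal{Y}^m$ the shuffler $S$ takes all $nm$ messages $R(x_1),\dots,R(x_n)$ and outputs them in a uniformly random order; $(R,S)$ is $(\varepsilon,\delta)$-differentially private in the shuffled model if $(x_1,\dots,x_n)\mapsto S(R(x_1),\dots,R(x_n))$ is $(\varepsilon,\delta)$-differentially private. $\log$ is the natural logarithm. *)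

theory Defs
  imports "HOL-Probability.Probability" "HOL-Combinatorics.Permutations"
begin

fun pmf_list :: "'a pmf list \<Rightarrow> 'a list pmf" where
  "pmf_list [] = return_pmf []"
| "pmf_list (p # ps) = bind_pmf p (\<lambda>x. bind_pmf (pmf_list ps) (\<lambda>xs. return_pmf (x # xs)))"

definition neighbours :: "'x list \<Rightarrow> 'x list \<Rightarrow> bool" where
  "neighbours X X' \<longleftrightarrow> length X = length X' \<and>
     (\<exists>i<length X. \<forall>j<length X. j \<noteq> i \<longrightarrow> X ! j = X' ! j)"

definition diff_private :: "nat \<Rightarrow> ('x list \<Rightarrow> 'o pmf) \<Rightarrow> real \<Rightarrow> real \<Rightarrow> bool" where
  "diff_private n M eps delta \<longleftrightarrow>
     (\<forall>X X' T. length X = n \<longrightarrow> neighbours X X' \<longrightarrow>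
        measure_pmf.prob (M X) T \<le> exp eps * measure_pmf.prob (M X') T + delta)"

definition shuffle :: "'y list \<Rightarrow> 'y list pmf" where
  "shuffle ys = map_pmf (\<lambda>\<pi>. map (\<lambda>i. ys ! \<pi> i) [0..<length ys])
                   (pmf_of_set {\<pi>. \<pi> permutes {0..<length ys}})"

definition shuffled :: "('x \<Rightarrow> 'y list pmf) \<Rightarrow> 'x list \<Rightarrow> 'y list pmf" where
  "shuffled R X = bind_pmf (pmf_list (map R X)) (\<lambda>yss. shuffle (concat yss))"

definition shuffled_dp :: "nat \<Rightarrow> ('x \<Rightarrow> 'y list pmf) \<Rightarrow> real \<Rightarrow> real \<Rightarrow> bool" where
  "shuffled_dp n R eps delta \<longleftrightarrow> diff_private n (shuffled R) eps delta"

definition compose_rand :: "(nat \<Rightarrow> 'x \<Rightarrow> 'y list pmf) \<Rightarrow> nat \<Rightarrow> 'x \<Rightarrow> 'y list pmf" where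
  "compose_rand R T x = map_pmf concat (pmf_list (map (\<lambda>t. R t x) [0..<T]))"

end

theory Submission
  imports Defs
begin

text \<open>A shuffle depends only on the multiset of its input, so shuffling all \<open>m T\<close> messages of the
  composed randomizer is the same as running the \<open>T\<close> shuffled protocols independently and shuffling
  the concatenation of their outputs once more. The composed protocol is therefore a post-processing
  of \<open>T\<close> independent pairs of \<open>(\<epsilon>, \<delta>)\<close>-indistinguishable distributions, and the bound is the
  advanced composition theorem of Dwork, Rothblum and Vadhan. Each pair is trimmed to
  sub-distributions of mass at least \<open>1 - \<delta>\<close> that are pointwise within a factor \<open>e\<^sup>\<epsilon>\<close>; on the
  trimmed parts the privacy loss is a sum of \<open>T\<close> independent terms bounded by \<open>\<epsilon>\<close> with mean at most
  \<open>\<epsilon> (e\<^sup>\<epsilon> - 1)\<close>, so by Hoeffding's lemma and a Chernoff bound it exceeds \<open>\<epsilon>'\<close> with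
  probability at most \<open>\<delta>'\<close>. The trimmed-off mass costs at most \<open>T \<delta>\<close>.\<close>

section \<open>Independent products of distributions\<close>

lemma set_pmf_pmf_list: "ys \<in> set_pmf (pmf_list ps) \<Longrightarrow> list_all2 (\<lambda>y p. y \<in> set_pmf p) ys ps"
  by (induction ps arbitrary: ys) auto

lemma length_of_set_pmf_list: "ys \<in> set_pmf (pmf_list ps) \<Longrightarrow> length ys = length ps"
  using set_pmf_pmf_list list_all2_lengthD by blast

lemma nth_of_set_pmf_list:
  "ys \<in> set_pmf (pmf_list ps) \<Longrightarrow> i < length ps \<Longrightarrow> ys ! i \<in> set_pmf (ps ! i)"
  using set_pmf_pmf_list by (fastforce simp: list_all2_conv_all_nth)

lemma pmf_list_Cons_map: "pmf_list (p # ps) = bind_pmf p (\<lambda>x. map_pmf (Cons x) (pmf_list ps))"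
  by (simp add: map_pmf_def)

lemma pmf_list_map_map_pmf: "pmf_list (map (map_pmf g) ps) = map_pmf (map g) (pmf_list ps)"
  by (induction ps) (simp_all add: map_bind_pmf bind_map_pmf map_pmf_def bind_assoc_pmf bind_return_pmf)

lemma pmf_list_map_bind_pmf:
  "pmf_list (map (\<lambda>p. bind_pmf p K) ps) = bind_pmf (pmf_list ps) (\<lambda>ys. pmf_list (map K ys))"
proof (induction ps)
  case (Cons p ps)
  then show ?case
    by (simp add: bind_assoc_pmf bind_return_pmf) (subst bind_commute_pmf, simp)
qed (simp add: bind_return_pmf)

lemma pmf_list_map_pmf_list_map2_Cons:
  assumes "length ps = length pss"
  shows "pmf_list (map pmf_list (map2 Cons ps pss))
       = bind_pmf (pmf_list ps) (\<lambda>ys. map_pmf (map2 Cons ys) (pmf_list (map pmf_list pss)))"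
  using assms
proof (induction ps pss rule: list_induct2)
  case (Cons p ps qs pss)
  then show ?case
    by (simp add: pmf_list_Cons_map bind_map_pmf map_bind_pmf pmf.map_comp o_def bind_assoc_pmf
        del: pmf_list.simps)
       (subst bind_commute_pmf, simp)
qed (simp add: bind_return_pmf)

text \<open>Unlike \<open>transpose\<close>, \<open>columns T\<close> keeps all \<open>T\<close> columns of an empty list of rows.\<close>
definition columns :: "nat \<Rightarrow> 'a list list \<Rightarrow> 'a list list" where
  "columns T xss = map (\<lambda>k. map (\<lambda>r. r ! k) xss) [0..<T]"

lemma length_columns [simp]: "length (columns T xss) = T"
  by (simp add: columns_def)

lemma columns_Nil: "columns T [] = replicate T []"
  by (simp add: columns_def map_replicate_const)

lemma columns_Cons: "length r = T \<Longrightarrow> columns T (r # xss) = map2 Cons r (columns T xss)"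
  unfolding columns_def by (rule nth_equalityI) auto

lemma mset_concat_columns:
  "\<forall>r\<in>set xss. length r = T \<Longrightarrow>
     mset (concat (map concat (columns T xss))) = mset (concat (map concat xss))"
proof (induction xss)
  case Nil
  then show ?case by (simp add: columns_Nil)
next
  case (Cons r xss)
  have "mset (concat (map concat (map2 Cons r cs))) = mset (concat r) + mset (concat (map concat cs))"
    if "length r = length cs" for cs :: "'a list list list"
    using that by (induction r cs rule: list_induct2) (auto simp: ac_simps)
  with Cons show ?case by (simp add: columns_Cons)
qed

lemma pmf_list_columns:
  "\<forall>r\<in>set xss. length r = T \<Longrightarrow>
     pmf_list (map pmf_list (columns T xss)) = map_pmf (columns T) (pmf_list (map pmf_list xss))"
proof (induction xss)
  case Nil
  have "pmf_list (map pmf_list (replicate T [])) = return_pmf (replicate T ([] :: 'a list))"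
    by (induction T) (simp_all add: bind_return_pmf)
  then show ?case by (simp add: columns_Nil)
next
  case (Cons r xss)
  then have r: "length r = T" by simp
  have "pmf_list (map pmf_list (columns T (r # xss)))
      = bind_pmf (pmf_list r) (\<lambda>ys. map_pmf (map2 Cons ys) (pmf_list (map pmf_list (columns T xss))))"
    using r by (simp only: columns_Cons pmf_list_map_pmf_list_map2_Cons length_columns)
  also have "\<dots> = bind_pmf (pmf_list r) (\<lambda>ys. map_pmf (\<lambda>N. columns T (ys # N)) (pmf_list (map pmf_list xss)))"
    using Cons r
    by (intro bind_pmf_cong refl) (simp add: pmf.map_comp o_def columns_Cons length_of_set_pmf_list)
  also have "\<dots> = map_pmf (columns T) (pmf_list (map pmf_list (r # xss)))"
    by (simp add: pmf_list_Cons_map map_bind_pmf pmf.map_comp o_def del: pmf_list.simps)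
  finally show ?case .
qed

lemma rows_length_of_set_pmf_list:
  assumes "N \<in> set_pmf (pmf_list (map pmf_list xss))" "\<forall>r\<in>set xss. length r = T"
  shows "\<forall>r\<in>set N. length r = T"
  using set_pmf_pmf_list[OF assms(1)] assms(2)
  by (induction N "map pmf_list xss" arbitrary: xss rule: list.rel_induct)
     (auto dest: length_of_set_pmf_list)

definition prod_density :: "nat \<Rightarrow> (nat \<Rightarrow> 'a \<Rightarrow> real) \<Rightarrow> 'a list \<Rightarrow> real" where
  "prod_density T h ys = (if length ys = T then \<Prod>i<T. h i (ys ! i) else 0)"

lemma prod_density_mono:
  assumes "\<And>i y. i < T \<Longrightarrow> 0 \<le> h i y" "\<And>i y. i < T \<Longrightarrow> h i y \<le> h' i y"
  shows "prod_density T h ys \<le> prod_density T h' ys"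
  using assms by (auto simp: prod_density_def intro: prod_mono)

lemma prod_density_nonneg: "(\<And>i y. i < T \<Longrightarrow> 0 \<le> h i y) \<Longrightarrow> 0 \<le> prod_density T h ys"
  by (auto simp: prod_density_def intro: prod_nonneg)

lemma pmf_pmf_list: "pmf (pmf_list ps) ys = prod_density (length ps) (\<lambda>i. pmf (ps ! i)) ys"
proof (induction ps arbitrary: ys)
  case Nil
  then show ?case by (cases ys) (auto simp: prod_density_def)
next
  case (Cons p ps)
  show ?case
  proof (cases ys)
    case Nil
    then show ?thesis
      using length_of_set_pmf_list[of ys "p # ps"]
      by (auto simp: set_pmf_iff prod_density_def simp del: pmf_list.simps)
  next
    case (Cons y ys')
    have "pmf (pmf_list (p # ps)) (y # ys') = pmf (pair_pmf p (pmf_list ps)) (y, ys')"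
      by (subst pmf_map_inj'[of "\<lambda>(x, xs). x # xs", symmetric])
         (auto simp: inj_def pair_pmf_def map_bind_pmf bind_assoc_pmf bind_return_pmf)
    then show ?thesis
      using Cons.IH[of ys']
      by (simp add: Cons pmf_pair prod.lessThan_Suc_shift prod_density_def
          del: pmf_list.simps prod.lessThan_Suc)
  qed
qed

lemma prod_density_mult_pmf:
  "prod_density T (\<lambda>i y. c i * pmf (p i) y) ys = (\<Prod>i<T. c i) * pmf (pmf_list (map p [0..<T])) ys"
  by (simp add: pmf_pmf_list prod_density_def prod.distrib)

lemma nn_integral_pmf_list_prod:
  "(\<integral>\<^sup>+ys. (\<Prod>i<length ps. f i (ys ! i)) \<partial>measure_pmf (pmf_list ps))
     = (\<Prod>i<length ps. \<integral>\<^sup>+y. f i y \<partial>measure_pmf (ps ! i))"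
proof (induction ps arbitrary: f)
  case (Cons p ps)
  show ?case
    by (simp add: prod.lessThan_Suc_shift nn_integral_cmult nn_integral_multc Cons.IH[of "\<lambda>i. f (Suc i)"]
        del: prod.lessThan_Suc)
qed simp

section \<open>Shuffling\<close>

lemma shuffle_eq_map_permute_list:
  "shuffle ys = map_pmf (\<lambda>\<pi>. permute_list \<pi> ys) (pmf_of_set {\<pi>. \<pi> permutes {..<length ys}})"
  unfolding shuffle_def permute_list_def by (simp add: atLeast0LessThan)

lemma set_pmf_of_set_permutations:
  "set_pmf (pmf_of_set {\<pi>. \<pi> permutes A}) = {\<pi>. \<pi> permutes (A :: 'a set)}" if "finite A"
  using that by (intro set_pmf_of_set) (auto intro: permutes_id finite_permutations)

lemma mset_of_set_pmf_shuffle: "zs \<in> set_pmf (shuffle ys) \<Longrightarrow> mset zs = mset ys"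
  by (auto simp: shuffle_eq_map_permute_list set_pmf_of_set_permutations)

lemma shuffle_cong_mset:
  assumes "mset xs = mset ys"
  shows "shuffle xs = shuffle ys"
proof -
  obtain \<sigma> where \<sigma>: "\<sigma> permutes {..<length ys}" "permute_list \<sigma> ys = xs"
    using mset_eq_permutation[OF assms] by blast
  let ?P = "{\<pi>. \<pi> permutes {..<length ys}}"
  have "bij_betw ((\<circ>) \<sigma>) ?P ?P"
    by (rule bij_betwI[where g = "(\<circ>) (inv \<sigma>)"])
       (use \<sigma>(1) in \<open>auto intro: permutes_compose permutes_inv simp: o_assoc permutes_inv_o\<close>)
  then have shift: "map_pmf ((\<circ>) \<sigma>) (pmf_of_set ?P) = pmf_of_set ?P"
    by (intro map_pmf_of_set_bij_betw) (auto intro: permutes_id finite_permutations)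
  have "shuffle xs = map_pmf (\<lambda>\<pi>. permute_list \<pi> (permute_list \<sigma> ys)) (pmf_of_set ?P)"
    unfolding \<sigma>(2)[symmetric] shuffle_eq_map_permute_list by simp
  also have "\<dots> = map_pmf (\<lambda>\<pi>. permute_list \<pi> ys) (map_pmf ((\<circ>) \<sigma>) (pmf_of_set ?P))"
    unfolding pmf.map_comp
    using \<sigma>(1) by (intro map_pmf_cong) (auto simp: permute_list_compose set_pmf_of_set_permutations)
  finally show ?thesis
    by (simp add: shift shuffle_eq_map_permute_list)
qed

lemma bind_pmf_list_map_shuffle:
  "bind_pmf (pmf_list (map shuffle xss)) (\<lambda>zs. shuffle (concat zs)) = shuffle (concat xss)"
proof -
  have "mset (concat zs) = mset (concat xss)" if "zs \<in> set_pmf (pmf_list (map shuffle xss))" for zs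
    using that by (induction xss arbitrary: zs) (auto dest: mset_of_set_pmf_shuffle)
  then show ?thesis
    by (subst bind_pmf_cong[OF refl, where g = "\<lambda>_. shuffle (concat xss)"])
       (auto intro: shuffle_cong_mset)
qed

lemma shuffled_compose_rand:
  "shuffled (compose_rand R T) X
     = bind_pmf (pmf_list (map (\<lambda>t. shuffled (R t) X) [0..<T])) (\<lambda>zs. shuffle (concat zs))"
proof -
  define A where "A = map (\<lambda>x. map (\<lambda>t. R t x) [0..<T]) X"
  have A: "\<forall>r\<in>set A. length r = T"
    by (simp add: A_def)
  let ?S = "\<lambda>N. shuffle (concat (map concat N))"
  have "map (\<lambda>t. shuffled (R t) X) [0..<T]
      = map (\<lambda>p. bind_pmf p (\<lambda>yss. shuffle (concat yss))) (map pmf_list (columns T A))"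
    by (simp add: shuffled_def columns_def A_def o_def)
  then have "bind_pmf (pmf_list (map (\<lambda>t. shuffled (R t) X) [0..<T])) (\<lambda>zs. shuffle (concat zs))
      = bind_pmf (pmf_list (map pmf_list (columns T A)))
          (\<lambda>N. bind_pmf (pmf_list (map shuffle (map concat N))) (\<lambda>zs. shuffle (concat zs)))"
    by (simp only: pmf_list_map_bind_pmf bind_assoc_pmf) (simp add: o_def)
  also have "\<dots> = bind_pmf (pmf_list (map pmf_list (columns T A))) ?S"
    by (simp only: bind_pmf_list_map_shuffle)
  also have "\<dots> = bind_pmf (pmf_list (map pmf_list A)) (\<lambda>N. ?S (columns T N))"
    by (simp add: pmf_list_columns[OF A] bind_map_pmf)
  also have "\<dots> = bind_pmf (pmf_list (map pmf_list A)) ?S"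
    using A by (intro bind_pmf_cong refl shuffle_cong_mset mset_concat_columns)
       (rule rows_length_of_set_pmf_list)
  also have "\<dots> = shuffled (compose_rand R T) X"
  proof -
    have "map (compose_rand R T) X = map (map_pmf concat) (map pmf_list A)"
      by (simp add: compose_rand_def A_def)
    then show ?thesis
      by (simp only: shuffled_def pmf_list_map_map_pmf bind_map_pmf o_def)
  qed
  finally show ?thesis ..
qed

section \<open>Sub-distributions\<close>

abbreviation total_mass :: "('a \<Rightarrow> real) \<Rightarrow> ennreal" where
  "total_mass f \<equiv> \<integral>\<^sup>+y. ennreal (f y) \<partial>count_space UNIV"

lemma total_mass_pmf: "total_mass (pmf p) = 1"
  by (simp add: nn_integral_pmf)

lemma total_mass_pmf_indicator: "total_mass (\<lambda>y. pmf p y * indicator A y) = measure_pmf.prob p A"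
proof -
  have "total_mass (\<lambda>y. pmf p y * indicator A y) = (\<integral>\<^sup>+y. indicator A y \<partial>measure_pmf p)"
    by (simp add: nn_integral_measure_pmf indicator_mult_ennreal mult.commute)
  then show ?thesis
    by (simp add: measure_pmf.emeasure_eq_measure)
qed

lemma total_mass_le_pmf:
  assumes "\<And>y. f y \<le> pmf p y"
  shows "total_mass f \<le> 1"
proof -
  have "total_mass f \<le> total_mass (pmf p)"
    using assms by (intro nn_integral_mono ennreal_leI)
  then show ?thesis
    by (simp add: total_mass_pmf)
qed

lemma total_mass_real_le_pmf:
  assumes "\<And>y. f y \<le> pmf p y"
  obtains r where "total_mass f = ennreal r" "0 \<le> r" "r \<le> 1"
proof -
  have "total_mass f \<le> 1"
    using assms by (rule total_mass_le_pmf)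
  then show thesis
    by (cases "total_mass f") (auto intro: that simp: ennreal_le_1 top_unique)
qed

text \<open>The overlap of \<open>p\<close> with \<open>a \<cdot> q\<close> misses only the excess of \<open>p\<close> on
  \<open>{p > a \<cdot> q}\<close>, and that excess is at most \<open>\<delta>\<close>.\<close>
lemma total_mass_min_pmf_ge:
  fixes p q :: "'a pmf"
  assumes "0 \<le> a" and dp: "\<And>S. measure_pmf.prob p S \<le> a * measure_pmf.prob q S + \<delta>"
  shows "ennreal (1 - \<delta>) \<le> total_mass (\<lambda>y. min (pmf p y) (a * pmf q y))"
proof -
  define A where "A = {y. a * pmf q y < pmf p y}"
  obtain r where r: "total_mass (\<lambda>y. min (pmf p y) (a * pmf q y)) = ennreal r" "0 \<le> r"
    using total_mass_real_le_pmf[of "\<lambda>y. min (pmf p y) (a * pmf q y)" p] by auto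
  have "ennreal (r + measure_pmf.prob p A)
      = total_mass (\<lambda>y. min (pmf p y) (a * pmf q y)) + total_mass (\<lambda>y. pmf p y * indicator A y)"
    using r by (simp add: ennreal_plus total_mass_pmf_indicator)
  also have "\<dots> = total_mass (\<lambda>y. min (pmf p y) (a * pmf q y) + pmf p y * indicator A y)"
    using \<open>0 \<le> a\<close> by (simp add: nn_integral_add ennreal_plus)
  also have "\<dots> = total_mass (\<lambda>y. pmf p y + a * (pmf q y * indicator A y))"
    by (intro nn_integral_cong) (auto simp: A_def add.commute split: split_indicator)
  also have "\<dots> = ennreal (1 + a * measure_pmf.prob q A)"
    using \<open>0 \<le> a\<close>
    by (simp add: nn_integral_add nn_integral_cmult ennreal_plus ennreal_mult[OF \<open>0 \<le> a\<close>]
        total_mass_pmf total_mass_pmf_indicator)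
  finally have "r + measure_pmf.prob p A = 1 + a * measure_pmf.prob q A"
    using \<open>0 \<le> a\<close> r by (subst (asm) ennreal_inj) auto
  then have "1 - \<delta> \<le> r"
    using dp[of A] by linarith
  then show ?thesis
    using r by (simp add: ennreal_leI)
qed

lemma exists_between_with_total_mass:
  fixes L U :: "'a \<Rightarrow> real"
  assumes L: "\<And>y. 0 \<le> L y" "total_mass L = ennreal l" "0 \<le> l"
    and U: "\<And>y. L y \<le> U y" "total_mass U = ennreal u"
    and "l \<le> m" "m \<le> u"
  obtains P where "\<And>y. L y \<le> P y" "\<And>y. P y \<le> U y" "total_mass P = ennreal m"
proof -
  define \<theta> where "\<theta> = (if l = u then 0 else (m - l) / (u - l))"
  have \<theta>: "0 \<le> \<theta>" "\<theta> \<le> 1" "l + \<theta> * (u - l) = m"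
    using \<open>l \<le> m\<close> \<open>m \<le> u\<close> by (auto simp: \<theta>_def field_simps)
  define P where "P y = L y + \<theta> * (U y - L y)" for y
  have "L y \<le> P y" "P y \<le> U y" for y
    using \<theta> U(1)[of y] mult_left_le_one_le[of "U y - L y" \<theta>] by (auto simp: P_def)
  moreover have "total_mass P = ennreal m"
  proof -
    have "total_mass P = total_mass (\<lambda>y. (1 - \<theta>) * L y + \<theta> * U y)"
      by (simp add: P_def algebra_simps)
    also have "\<dots> = ennreal (1 - \<theta>) * ennreal l + ennreal \<theta> * ennreal u"
      using \<theta> L(1) U(1) L(1)[THEN order_trans, OF U(1)]
      by (simp add: ennreal_plus ennreal_mult nn_integral_add nn_integral_cmult L(2) U(2))
    also have "\<dots> = ennreal ((1 - \<theta>) * l + \<theta> * u)"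
      using \<theta> \<open>0 \<le> l\<close> \<open>l \<le> m\<close> \<open>m \<le> u\<close> by (simp add: ennreal_plus ennreal_mult)
    also have "(1 - \<theta>) * l + \<theta> * u = m"
      using \<theta>(3) by (simp add: algebra_simps)
    finally show ?thesis .
  qed
  ultimately show thesis
    using that by blast
qed

section \<open>Privacy loss\<close>

lemma le_eps_exp_minus_one_plus_one_minus_exp:
  fixes x eps :: real
  assumes "\<bar>x\<bar> \<le> eps"
  shows "x \<le> eps * (exp eps - 1) + 1 - exp (- x)"
proof -
  have "exp (- x) * (1 + x) \<le> exp (- x) * exp x"
    using exp_ge_add_one_self[of x] by (intro mult_left_mono) auto
  then have "x - 1 + exp (- x) \<le> x * (1 - exp (- x))"
    by (simp add: algebra_simps flip: exp_add)
  also have "\<dots> \<le> eps * (exp eps - 1)"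
  proof (cases "0 \<le> x")
    case True
    have "1 - exp (- x) \<le> exp x - 1"
      using exp_ge_add_one_self[of x] exp_ge_add_one_self[of "- x"] by linarith
    also have "\<dots> \<le> exp eps - 1"
      using assms by simp
    finally show ?thesis
      using True assms by (intro mult_mono) auto
  next
    case False
    have "x * (1 - exp (- x)) = (- x) * (exp (- x) - 1)"
      by (simp add: algebra_simps)
    also have "\<dots> \<le> eps * (exp eps - 1)"
      using False assms by (intro mult_mono) auto
    finally show ?thesis .
  qed
  finally show ?thesis
    by simp
qed

text \<open>\<open>m \<cdot> p\<close> and \<open>g\<close> model the trimmed parts of two indistinguishable distributions; the
  mass condition on \<open>g\<close> is what bounds the expected privacy loss by \<open>\<epsilon> (e\<^sup>\<epsilon> - 1)\<close>.\<close>
locale bounded_privacy_loss =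
  fixes eps m :: real and p :: "'a pmf" and g :: "'a \<Rightarrow> real"
  assumes eps_nonneg: "0 \<le> eps"
    and m_pos: "0 < m"
    and g_nonneg: "0 \<le> g y"
    and total_mass_g: "ennreal m \<le> total_mass g"
    and le_exp_g: "m * pmf p y \<le> exp eps * g y"
    and g_le_exp: "g y \<le> exp eps * (m * pmf p y)"
begin

definition privacy_loss :: "'a \<Rightarrow> real" where
  "privacy_loss y = ln (m * pmf p y / g y)"

lemma g_pos: "y \<in> set_pmf p \<Longrightarrow> 0 < g y"
proof -
  assume "y \<in> set_pmf p"
  then have "0 < m * pmf p y"
    using m_pos by (intro mult_pos_pos pmf_positive)
  then have "0 < exp eps * g y"
    using le_exp_g[of y] by linarith
  then show ?thesis
    by (simp add: zero_less_mult_iff)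
qed

lemma exp_privacy_loss: "y \<in> set_pmf p \<Longrightarrow> exp (privacy_loss y) * g y = m * pmf p y"
  using g_pos[of y] m_pos pmf_positive[of y p] by (simp add: privacy_loss_def)

lemma abs_privacy_loss_le: "y \<in> set_pmf p \<Longrightarrow> \<bar>privacy_loss y\<bar> \<le> eps"
proof -
  assume y: "y \<in> set_pmf p"
  have "exp (privacy_loss y) * g y \<le> exp eps * g y" "g y \<le> exp eps * (exp (privacy_loss y) * g y)"
    using le_exp_g[of y] g_le_exp[of y] by (simp_all add: exp_privacy_loss[OF y])
  then have "exp (privacy_loss y) \<le> exp eps" "exp 0 \<le> exp (eps + privacy_loss y)"
    using g_pos[OF y] by (simp_all add: exp_add mult.assoc)
  then show ?thesis
    by simp
qed

lemma AE_abs_privacy_loss_le: "AE y in measure_pmf p. \<bar>privacy_loss y\<bar> \<le> eps"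
  by (rule AE_pmfI) (rule abs_privacy_loss_le)

lemma integrable_exp_neg_privacy_loss:
  "integrable (measure_pmf p) (\<lambda>y. exp (- privacy_loss y))"
proof (rule measure_pmf.integrable_const_bound[where B = "exp eps"])
  show "AE y in measure_pmf p. norm (exp (- privacy_loss y)) \<le> exp eps"
    using AE_abs_privacy_loss_le by eventually_elim simp
qed simp

lemma expectation_exp_neg_privacy_loss_ge:
  "1 \<le> measure_pmf.expectation p (\<lambda>y. exp (- privacy_loss y))"
proof -
  have "g y = pmf p y * (m * exp (- privacy_loss y))" for y
  proof (cases "y \<in> set_pmf p")
    case True
    then show ?thesis
      using exp_privacy_loss[of y] by (simp add: exp_minus field_simps)
  next
    case False
    then show ?thesis
      using g_le_exp[of y] g_nonneg[of y] by (simp add: set_pmf_iff)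
  qed
  then have "total_mass g = (\<integral>\<^sup>+y. ennreal m * ennreal (exp (- privacy_loss y)) \<partial>measure_pmf p)"
    using m_pos by (simp add: nn_integral_measure_pmf ennreal_mult)
  also have "\<dots> = ennreal (m * measure_pmf.expectation p (\<lambda>y. exp (- privacy_loss y)))"
    using m_pos integrable_exp_neg_privacy_loss
    by (simp add: nn_integral_cmult nn_integral_eq_integral ennreal_mult)
  finally show ?thesis
    using total_mass_g m_pos by (simp add: ennreal_le_iff)
qed

lemma interval_bounded_privacy_loss:
  "interval_bounded_random_variable (measure_pmf p) privacy_loss (- eps) eps"
  by unfold_locales (use AE_abs_privacy_loss_le in \<open>auto elim!: eventually_mono\<close>)

lemma expectation_privacy_loss_le: "measure_pmf.expectation p privacy_loss \<le> eps * (exp eps - 1)"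
proof -
  interpret interval_bounded_random_variable "measure_pmf p" privacy_loss "- eps" eps
    by (rule interval_bounded_privacy_loss)
  have "measure_pmf.expectation p privacy_loss
      \<le> measure_pmf.expectation p (\<lambda>y. eps * (exp eps - 1) + 1 - exp (- privacy_loss y))"
    using AE_abs_privacy_loss_le integrable_exp_neg_privacy_loss
    by (intro integral_mono_AE) (auto elim!: eventually_mono intro: le_eps_exp_minus_one_plus_one_minus_exp)
  also have "\<dots> = eps * (exp eps - 1) + 1 - measure_pmf.expectation p (\<lambda>y. exp (- privacy_loss y))"
    using integrable_exp_neg_privacy_loss by (simp add: measure_pmf.prob_space)
  finally show ?thesis
    using expectation_exp_neg_privacy_loss_ge by linarith
qed

lemma nn_integral_exp_privacy_loss_le:
  assumes "0 < s"
  shows "(\<integral>\<^sup>+y. exp (s * privacy_loss y) \<partial>measure_pmf p)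
           \<le> ennreal (exp (s * (eps * (exp eps - 1)) + s\<^sup>2 * eps\<^sup>2 / 2))"
proof -
  interpret interval_bounded_random_variable "measure_pmf p" privacy_loss "- eps" eps
    by (rule interval_bounded_privacy_loss)
  define E where "E = measure_pmf.expectation p privacy_loss"
  have "(\<integral>\<^sup>+y. exp (s * privacy_loss y) \<partial>measure_pmf p)
      = ennreal (exp (s * E)) * (\<integral>\<^sup>+y. exp (s * (privacy_loss y - E)) \<partial>measure_pmf p)"
  proof -
    have "exp (s * privacy_loss y) = exp (s * E) * exp (s * (privacy_loss y - E))" for y
      by (simp add: algebra_simps flip: exp_add)
    then show ?thesis
      by (simp add: ennreal_mult nn_integral_cmult)
  qed
  also have "\<dots> \<le> ennreal (exp (s * E)) * ennreal (exp (s\<^sup>2 * (eps - - eps)\<^sup>2 / 8))"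
    using Hoeffdings_lemma_nn_integral[OF assms] by (intro mult_left_mono) (auto simp: E_def)
  also have "\<dots> = ennreal (exp (s * E + s\<^sup>2 * eps\<^sup>2 / 2))"
  proof -
    have "s\<^sup>2 * (eps - - eps)\<^sup>2 / 8 = s\<^sup>2 * eps\<^sup>2 / 2"
      by (simp add: power2_eq_square)
    then show ?thesis
      by (simp add: exp_add ennreal_mult mult.commute)
  qed
  also have "\<dots> \<le> ennreal (exp (s * (eps * (exp eps - 1)) + s\<^sup>2 * eps\<^sup>2 / 2))"
    using assms expectation_privacy_loss_le by (simp add: E_def)
  finally show ?thesis .
qed

end

section \<open>Trimming\<close>

lemma min_le_mult_min:
  fixes x y a :: real
  assumes "1 \<le> a" "0 \<le> x" "0 \<le> y"
  shows "min x (a * y) \<le> a * min y (a * x)"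
proof -
  have "x \<le> a * (a * x)"
    using assms mult_mono[of 1 a 1 a] mult_right_mono[of 1 "a * a" x] by (simp add: mult.assoc)
  then show ?thesis
    using assms by (auto simp: min_mult_distrib_left)
qed

lemma exists_pmf_scaled_eq:
  assumes "\<And>y. 0 \<le> P y" "total_mass P = ennreal m" "0 < m"
  obtains p' where "\<And>y. m * pmf p' y = P y"
proof
  have "total_mass (\<lambda>y. P y / m) = (\<integral>\<^sup>+y. ennreal (P y) * ennreal (1 / m) \<partial>count_space UNIV)"
    using assms(1,3) by (simp flip: ennreal_mult)
  also have "\<dots> = ennreal m * ennreal (1 / m)"
    by (simp add: nn_integral_multc assms(2))
  also have "\<dots> = 1"
    using assms(3) by (simp flip: ennreal_mult)
  finally show "m * pmf (embed_pmf (\<lambda>y. P y / m)) y = P y" for y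
    using assms(1,3) by (simp add: pmf_embed_pmf)
qed

text \<open>The candidates \<open>U = min p (e\<^sup>\<epsilon> q)\<close> and \<open>V = min q (e\<^sup>\<epsilon> p)\<close> may
  have different masses; \<open>U\<close> is lowered towards \<open>e\<^sup>-\<^sup>\<epsilon> V\<close> until its mass is the smaller one.\<close>
lemma exists_trimmed_subdistributions:
  fixes p q :: "'a pmf"
  assumes "0 \<le> eps" "\<delta> < 1"
    and pq: "\<And>S. measure_pmf.prob p S \<le> exp eps * measure_pmf.prob q S + \<delta>"
    and qp: "\<And>S. measure_pmf.prob q S \<le> exp eps * measure_pmf.prob p S + \<delta>"
  shows "\<exists>m p' g. bounded_privacy_loss eps m p' g \<and> 1 - \<delta> \<le> m \<and> m \<le> 1 \<and>
           (\<forall>y. m * pmf p' y \<le> pmf p y) \<and> (\<forall>y. g y \<le> pmf q y)"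
proof -
  define a where "a = exp eps"
  have "1 \<le> a"
    using \<open>0 \<le> eps\<close> by (simp add: a_def)
  define U where "U y = min (pmf p y) (a * pmf q y)" for y
  define V where "V y = min (pmf q y) (a * pmf p y)" for y
  have V_nonneg: "0 \<le> V y" for y
    using \<open>1 \<le> a\<close> by (simp add: V_def)
  have U_le_V: "U y \<le> a * V y" and "V y \<le> a * U y" for y
    unfolding U_def V_def using min_le_mult_min[OF \<open>1 \<le> a\<close>] by simp_all
  then have V_le_U: "V y / a \<le> U y" for y
    using \<open>1 \<le> a\<close> by (simp add: divide_le_eq mult.commute)
  obtain c where c: "total_mass U = ennreal c" "0 \<le> c" "1 - \<delta> \<le> c"
    using total_mass_real_le_pmf[of U p] total_mass_min_pmf_ge[of a p q \<delta>] \<open>1 \<le> a\<close> pq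
    by (force simp: U_def a_def ennreal_le_iff)
  obtain d where d: "total_mass V = ennreal d" "0 \<le> d" "1 - \<delta> \<le> d"
    using total_mass_real_le_pmf[of V q] total_mass_min_pmf_ge[of a q p \<delta>] \<open>1 \<le> a\<close> qp
    by (force simp: V_def a_def ennreal_le_iff)
  define m where "m = min c d"
  have m: "0 < m" "1 - \<delta> \<le> m" "m \<le> 1"
    using c d \<open>\<delta> < 1\<close> total_mass_le_pmf[of U p] by (auto simp: m_def U_def)
  have total_mass_V: "total_mass (\<lambda>y. V y / a) = ennreal (d / a)"
    using \<open>1 \<le> a\<close> V_nonneg d(2)
    by (simp add: divide_inverse ennreal_mult nn_integral_cmult d(1) mult.commute)
  then have "ennreal (d / a) \<le> ennreal c"
    using c(1) V_le_U by (metis ennreal_leI nn_integral_mono)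
  moreover have "d / a \<le> d"
    using \<open>1 \<le> a\<close> d(2) by (simp add: divide_le_eq mult_le_cancel_left1)
  ultimately have "d / a \<le> m"
    using c(2) by (simp add: m_def ennreal_le_iff)
  obtain P where P: "\<And>y. V y / a \<le> P y" "\<And>y. P y \<le> U y" "total_mass P = ennreal m"
    using exists_between_with_total_mass[of "\<lambda>y. V y / a" "d / a" U c m] V_nonneg V_le_U
      total_mass_V c \<open>d / a \<le> m\<close> \<open>1 \<le> a\<close> d(2) by (auto simp: m_def)
  moreover have "0 \<le> P y" for y
    using P(1)[of y] V_nonneg[of y] \<open>1 \<le> a\<close> by (smt (verit) divide_nonneg_nonneg)
  ultimately obtain p' where p': "\<And>y. m * pmf p' y = P y"
    using exists_pmf_scaled_eq m(1) by blast
  have "bounded_privacy_loss eps m p' V"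
  proof
    show "ennreal m \<le> total_mass V"
      using d(1) by (simp add: m_def ennreal_leI)
    show "m * pmf p' y \<le> exp eps * V y" for y
      using P(2)[of y] U_le_V[of y] by (simp add: p' a_def)
    show "V y \<le> exp eps * (m * pmf p' y)" for y
      using P(1)[of y] \<open>1 \<le> a\<close> by (simp add: p' a_def divide_le_eq mult.commute)
  qed (use \<open>0 \<le> eps\<close> m(1) V_nonneg in auto)
  moreover have "m * pmf p' y \<le> pmf p y" "V y \<le> pmf q y" for y
    using P(2)[of y] by (simp_all add: p' U_def V_def)
  ultimately show ?thesis
    using m by blast
qed

section \<open>Advanced composition\<close>

lemma indicator_less_le_exp:
  fixes f :: "'a \<Rightarrow> real"
  assumes "0 \<le> s"
  shows "indicator {x. a < f x} x \<le> exp (s * (f x - a))"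
  using assms by (auto simp: indicator_def)

lemma chernoff_bound_pmf_list:
  fixes L :: "nat \<Rightarrow> 'a \<Rightarrow> real" and pp :: "nat \<Rightarrow> 'a pmf"
  assumes "0 \<le> s"
  shows "emeasure (measure_pmf (pmf_list (map pp [0..<T]))) {ys. a < (\<Sum>i<T. L i (ys ! i))}
     \<le> ennreal (exp (- s * a)) * (\<Prod>i<T. \<integral>\<^sup>+y. exp (s * L i y) \<partial>measure_pmf (pp i))"
    (is "emeasure (measure_pmf ?P) {ys. a < ?L ys} \<le> _")
proof -
  have "emeasure (measure_pmf ?P) {ys. a < ?L ys} = (\<integral>\<^sup>+ys. indicator {ys. a < ?L ys} ys \<partial>measure_pmf ?P)"
    by simp
  also have "\<dots> \<le> (\<integral>\<^sup>+ys. ennreal (exp (- s * a)) * (\<Prod>i<T. ennreal (exp (s * L i (ys ! i))))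
      \<partial>measure_pmf ?P)"
  proof (rule nn_integral_mono)
    fix ys
    have "exp (s * (?L ys - a)) = exp (- s * a + (\<Sum>i<T. s * L i (ys ! i)))"
      by (simp add: algebra_simps sum_distrib_left)
    also have "\<dots> = exp (- s * a) * (\<Prod>i<T. exp (s * L i (ys ! i)))"
      by (subst exp_add) (simp add: exp_sum)
    finally have "ennreal (indicator {ys. a < ?L ys} ys)
        \<le> ennreal (exp (- s * a) * (\<Prod>i<T. exp (s * L i (ys ! i))))"
      using indicator_less_le_exp[of s a ?L ys] assms by (intro ennreal_leI) simp
    then show "indicator {ys. a < ?L ys} ys
        \<le> ennreal (exp (- s * a)) * (\<Prod>i<T. ennreal (exp (s * L i (ys ! i))))"
      by (simp add: ennreal_indicator ennreal_mult' prod_ennreal)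
  qed
  also have "\<dots> = ennreal (exp (- s * a)) * (\<Prod>i<T. \<integral>\<^sup>+y. exp (s * L i y) \<partial>measure_pmf (pp i))"
    using nn_integral_pmf_list_prod[of "map pp [0..<T]" "\<lambda>i y. ennreal (exp (s * L i y))"]
    by (simp add: nn_integral_cmult)
  finally show ?thesis .
qed

lemma chernoff_exponent_eq:
  fixes eps dl K :: real
  assumes "0 < eps" "0 < T" "0 < dl" "dl < 1"
  defines "\<sigma> \<equiv> sqrt (2 * real T * ln (1 / dl))"
  defines "s \<equiv> \<sigma> / (real T * eps)"
  shows "- s * (K * real T + eps * \<sigma>) + real T * (s * K + s\<^sup>2 * eps\<^sup>2 / 2) = ln dl"
proof -
  have "s * eps = \<sigma> / real T"
    using assms by (simp add: s_def)
  have "- s * (K * real T + eps * \<sigma>) + real T * (s * K + s\<^sup>2 * eps\<^sup>2 / 2)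
      = - (s * eps) * \<sigma> + real T * (s * eps)\<^sup>2 / 2"
    by (simp add: algebra_simps power2_eq_square)
  also have "\<dots> = - \<sigma>\<^sup>2 / (2 * real T)"
    using assms by (simp add: \<open>s * eps = \<sigma> / real T\<close> power2_eq_square field_simps)
  also have "\<sigma>\<^sup>2 = 2 * real T * ln (1 / dl)"
    using assms by (simp add: \<sigma>_def)
  finally show ?thesis
    using assms by (simp add: ln_div)
qed

lemma emeasure_pmf_list_sum_gt_le:
  fixes L :: "nat \<Rightarrow> 'a \<Rightarrow> real" and pp :: "nat \<Rightarrow> 'a pmf"
  assumes "0 \<le> K" "0 < dl"
    and bounded: "\<And>i y. i < T \<Longrightarrow> y \<in> set_pmf (pp i) \<Longrightarrow> \<bar>L i y\<bar> \<le> eps"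
    and mgf: "\<And>i s. i < T \<Longrightarrow> 0 < s \<Longrightarrow>
      (\<integral>\<^sup>+y. exp (s * L i y) \<partial>measure_pmf (pp i)) \<le> ennreal (exp (s * K + s\<^sup>2 * eps\<^sup>2 / 2))"
  shows "emeasure (measure_pmf (pmf_list (map pp [0..<T])))
     {ys. K * real T + eps * sqrt (2 * real T * ln (1 / dl)) < (\<Sum>i<T. L i (ys ! i))} \<le> dl"
    (is "emeasure (measure_pmf ?P) {ys. ?a < ?L ys} \<le> _")
proof -
  consider "T = 0 \<or> eps \<le> 0" | "1 \<le> dl" | "0 < T" "0 < eps" "dl < 1"
    by linarith
  then show ?thesis
  proof cases
    case 1
    have "\<not> ?a < ?L ys" if ys: "ys \<in> set_pmf ?P" for ys
    proof -
      have L: "\<bar>L i (ys ! i)\<bar> \<le> eps" if "i < T" for i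
        using bounded[OF that] nth_of_set_pmf_list[OF ys, of i] that by simp
      show ?thesis
      proof (cases "T = 0")
        case False
        then have "eps = 0"
          using 1 L[of 0] by linarith
        then show ?thesis
          using L \<open>0 \<le> K\<close> by (simp add: not_less)
      qed simp
    qed
    then have "emeasure (measure_pmf ?P) {ys \<in> space (measure_pmf ?P). ?a < ?L ys} = 0"
      by (intro emeasure_eq_0_AE AE_pmfI)
    then show ?thesis
      by simp
  next
    case 2
    have "emeasure (measure_pmf ?P) {ys. ?a < ?L ys} \<le> 1"
      by (rule measure_pmf.emeasure_le_1)
    also have "1 \<le> ennreal dl"
      using 2 by simp
    finally show ?thesis .
  next
    case 3
    define \<sigma> where "\<sigma> = sqrt (2 * real T * ln (1 / dl))"
    define s where "s = \<sigma> / (real T * eps)"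
    have "0 < ln (1 / dl)"
      using 3 \<open>0 < dl\<close> by simp
    then have "0 < s"
      using 3 by (simp add: s_def \<sigma>_def)
    have "emeasure (measure_pmf ?P) {ys. ?a < ?L ys}
        \<le> ennreal (exp (- s * ?a)) * (\<Prod>i<T. \<integral>\<^sup>+y. exp (s * L i y) \<partial>measure_pmf (pp i))"
      using \<open>0 < s\<close> by (intro chernoff_bound_pmf_list) simp
    also have "\<dots> \<le> ennreal (exp (- s * ?a)) * (\<Prod>i<T. ennreal (exp (s * K + s\<^sup>2 * eps\<^sup>2 / 2)))"
      using mgf \<open>0 < s\<close> by (intro mult_left_mono prod_mono_ennreal) auto
    also have "\<dots> = ennreal (exp (- s * ?a) * exp (s * K + s\<^sup>2 * eps\<^sup>2 / 2) ^ T)"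
      by (simp add: ennreal_mult' ennreal_power)
    also have "\<dots> = ennreal (exp (- s * ?a + real T * (s * K + s\<^sup>2 * eps\<^sup>2 / 2)))"
      by (simp only: exp_add exp_of_nat_mult)
    also have "\<dots> = dl"
      using chernoff_exponent_eq[of eps T dl K] 3 \<open>0 < dl\<close> by (simp add: s_def \<sigma>_def)
    finally show ?thesis .
  qed
qed

lemma prob_bind_pmf_eq_total_mass:
  "ennreal (measure_pmf.prob (bind_pmf P K) S) = total_mass (\<lambda>z. pmf P z * measure_pmf.prob (K z) S)"
  by (simp add: nn_integral_measure_pmf ennreal_mult flip: measure_pmf.emeasure_eq_measure)

lemma prob_bind_pmf_le_by_subdistribution:
  fixes P Q :: "'a pmf" and f g :: "'a \<Rightarrow> real" and K :: "'a \<Rightarrow> 'b pmf"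
  assumes f: "\<And>z. 0 \<le> f z" "\<And>z. f z \<le> pmf P z" "ennreal (1 - \<beta>) \<le> total_mass f"
    and g: "\<And>z. g z \<le> pmf Q z"
    and bad: "total_mass (\<lambda>z. f z * indicator E z) \<le> ennreal \<gamma>" "0 \<le> \<gamma>"
    and good: "\<And>z. z \<notin> E \<Longrightarrow> f z \<le> exp e * g z"
  shows "measure_pmf.prob (bind_pmf P K) S \<le> exp e * measure_pmf.prob (bind_pmf Q K) S + \<beta> + \<gamma>"
proof -
  define fr where "fr z = measure_pmf.prob (K z) S" for z
  have fr: "0 \<le> fr z" "fr z \<le> 1" for z
    by (simp_all add: fr_def)
  obtain r where r: "total_mass f = ennreal r" "0 \<le> r"
    using total_mass_real_le_pmf[OF f(2)] by blast
  have "1 - \<beta> \<le> r"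
    using f(3) r ennreal_le_iff by (cases "0 \<le> 1 - \<beta>") auto
  have pointwise: "pmf P z * fr z + f z \<le> pmf P z + f z * indicator E z + exp e * (pmf Q z * fr z)"
    for z
  proof (cases "z \<in> E")
    case True
    have "pmf P z * fr z \<le> pmf P z" "0 \<le> exp e * (pmf Q z * fr z)"
      using fr[of z] by (simp_all add: mult_left_le)
    then show ?thesis
      using True by simp
  next
    case False
    have "f z \<le> exp e * pmf Q z"
      using good[OF False] g[of z] by (smt (verit) exp_gt_zero mult_left_mono)
    have "f z = f z * (1 - fr z) + f z * fr z"
      by (simp add: algebra_simps)
    also have "\<dots> \<le> pmf P z * (1 - fr z) + exp e * (pmf Q z * fr z)"
      using f(2)[of z] \<open>f z \<le> exp e * pmf Q z\<close> fr[of z]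
      by (simp add: add_mono mult_right_mono flip: mult.assoc)
    finally show ?thesis
      using False by (simp add: algebra_simps)
  qed
  have "ennreal (measure_pmf.prob (bind_pmf P K) S + r)
      = total_mass (\<lambda>z. pmf P z * fr z + f z)"
    using f(1) fr r by (simp add: nn_integral_add prob_bind_pmf_eq_total_mass fr_def)
  also have "\<dots> \<le> total_mass (\<lambda>z. pmf P z + f z * indicator E z + exp e * (pmf Q z * fr z))"
    using pointwise by (intro nn_integral_mono ennreal_leI)
  also have "\<dots> = 1 + total_mass (\<lambda>z. f z * indicator E z)
      + ennreal (exp e) * ennreal (measure_pmf.prob (bind_pmf Q K) S)"
    using f(1) fr
    by (simp add: nn_integral_add nn_integral_cmult total_mass_pmf ennreal_mult fr_def
        prob_bind_pmf_eq_total_mass)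
  also have "\<dots> \<le> ennreal (1 + \<gamma> + exp e * measure_pmf.prob (bind_pmf Q K) S)"
    using bad by (simp add: add_mono ennreal_plus ennreal_mult)
  finally have "measure_pmf.prob (bind_pmf P K) S + r \<le> 1 + \<gamma> + exp e * measure_pmf.prob (bind_pmf Q K) S"
    using bad(2) by (subst (asm) ennreal_le_iff) auto
  then show ?thesis
    using \<open>1 - \<beta> \<le> r\<close> by linarith
qed

lemma one_minus_prod_le_sum:
  fixes c :: "nat \<Rightarrow> real"
  assumes "\<And>i. i < n \<Longrightarrow> 0 \<le> c i \<and> c i \<le> 1"
  shows "1 - (\<Prod>i<n. c i) \<le> (\<Sum>i<n. 1 - c i)"
  using assms
proof (induction n)
  case (Suc n)
  have "(\<Prod>i<n. c i) \<le> 1" "c n \<le> 1"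
    using Suc.prems by (auto intro: prod_le_1)
  then have "0 \<le> (1 - (\<Prod>i<n. c i)) * (1 - c n)"
    by simp
  with Suc show ?case
    by (simp add: algebra_simps)
qed simp

context
  fixes eps :: real and T :: nat and mm :: "nat \<Rightarrow> real" and pp :: "nat \<Rightarrow> 'a pmf"
    and gg :: "nat \<Rightarrow> 'a \<Rightarrow> real"
  assumes trimmed: "\<And>i. i < T \<Longrightarrow> bounded_privacy_loss eps (mm i) (pp i) (gg i)"
begin

abbreviation (input) L :: "nat \<Rightarrow> 'a \<Rightarrow> real" where
  "L i \<equiv> bounded_privacy_loss.privacy_loss (mm i) (pp i) (gg i)"

lemma prod_density_eq_exp_sum_privacy_loss:
  assumes "ys \<in> set_pmf (pmf_list (map pp [0..<T]))"
  shows "prod_density T (\<lambda>i y. mm i * pmf (pp i) y) ys = exp (\<Sum>i<T. L i (ys ! i)) * prod_density T gg ys"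
proof -
  have "length ys = T"
    using length_of_set_pmf_list[OF assms] by simp
  moreover have "mm i * pmf (pp i) (ys ! i) = exp (L i (ys ! i)) * gg i (ys ! i)" if "i < T" for i
    using bounded_privacy_loss.exp_privacy_loss[OF trimmed[OF that]]
      nth_of_set_pmf_list[OF assms, of i] that by simp
  ultimately show ?thesis
    by (simp add: prod_density_def exp_sum prod.distrib)
qed

lemma prod_density_le_exp_prod_density:
  assumes "\<not> a < (\<Sum>i<T. L i (ys ! i))"
  shows "prod_density T (\<lambda>i y. mm i * pmf (pp i) y) ys \<le> exp a * prod_density T gg ys"
proof -
  have gg_nonneg: "0 \<le> prod_density T gg ys"
    using bounded_privacy_loss.g_nonneg[OF trimmed] by (rule prod_density_nonneg)
  show ?thesis
  proof (cases "ys \<in> set_pmf (pmf_list (map pp [0..<T]))")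
    case True
    then show ?thesis
      using assms gg_nonneg by (simp add: prod_density_eq_exp_sum_privacy_loss mult_right_mono)
  next
    case False
    then show ?thesis
      using gg_nonneg by (simp add: prod_density_mult_pmf set_pmf_iff)
  qed
qed

lemma total_mass_prod_density_privacy_loss_gt_le:
  assumes "0 \<le> eps" "0 < dl" "\<And>i. i < T \<Longrightarrow> mm i \<le> 1"
  defines "E \<equiv> {ys. eps * (exp eps - 1) * real T + eps * sqrt (2 * real T * ln (1 / dl))
                     < (\<Sum>i<T. L i (ys ! i))}"
  shows "total_mass (\<lambda>ys. prod_density T (\<lambda>i y. mm i * pmf (pp i) y) ys * indicator E ys) \<le> dl"
proof -
  define M where "M = (\<Prod>i<T. mm i)"
  have "0 \<le> M" "M \<le> 1"
    using assms(3) bounded_privacy_loss.m_pos[OF trimmed]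
    by (auto simp: M_def intro: prod_nonneg prod_le_1 less_imp_le)
  have "total_mass (\<lambda>ys. prod_density T (\<lambda>i y. mm i * pmf (pp i) y) ys * indicator E ys)
      = ennreal M * emeasure (measure_pmf (pmf_list (map pp [0..<T]))) E"
    using \<open>0 \<le> M\<close>
    by (simp add: prod_density_mult_pmf ennreal_mult[OF \<open>0 \<le> M\<close>] nn_integral_cmult mult.assoc
        total_mass_pmf_indicator measure_pmf.emeasure_eq_measure flip: M_def)
  also have "\<dots> \<le> 1 * ennreal dl"
    unfolding E_def using assms bounded_privacy_loss.abs_privacy_loss_le[OF trimmed]
      bounded_privacy_loss.nn_integral_exp_privacy_loss_le[OF trimmed] \<open>M \<le> 1\<close>
    by (intro mult_mono emeasure_pmf_list_sum_gt_le[where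
          L = "\<lambda>i y. bounded_privacy_loss.privacy_loss (mm i) (pp i) (gg i) y"]) auto
  finally show ?thesis
    by simp
qed

lemma prob_bind_pmf_list_le_by_trimming:
  fixes ps qs :: "'a pmf list" and K :: "'a list \<Rightarrow> 'b pmf"
  assumes len: "length ps = T" "length qs = T" and "0 \<le> eps" "0 < dl"
    and mm: "\<And>i. i < T \<Longrightarrow> 1 - \<delta> \<le> mm i \<and> mm i \<le> 1"
    and pp: "\<And>i y. i < T \<Longrightarrow> mm i * pmf (pp i) y \<le> pmf (ps ! i) y"
    and gg: "\<And>i y. i < T \<Longrightarrow> gg i y \<le> pmf (qs ! i) y"
  shows "measure_pmf.prob (bind_pmf (pmf_list ps) K) S
     \<le> exp (eps * (exp eps - 1) * real T + eps * sqrt (2 * real T * ln (1 / dl)))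
         * measure_pmf.prob (bind_pmf (pmf_list qs) K) S + real T * \<delta> + dl"
proof (rule prob_bind_pmf_le_by_subdistribution[OF _ _ _ _
      total_mass_prod_density_privacy_loss_gt_le[OF \<open>0 \<le> eps\<close> \<open>0 < dl\<close>] _
      prod_density_le_exp_prod_density])
  have mm_pos: "\<And>i. i < T \<Longrightarrow> 0 < mm i"
    using bounded_privacy_loss.m_pos[OF trimmed] .
  show "0 \<le> prod_density T (\<lambda>i y. mm i * pmf (pp i) y) ys" for ys
    using mm_pos by (intro prod_density_nonneg) (simp add: less_imp_le)
  show "prod_density T (\<lambda>i y. mm i * pmf (pp i) y) ys \<le> pmf (pmf_list ps) ys" for ys
    unfolding pmf_pmf_list len(1) using pp mm_pos
    by (intro prod_density_mono) (simp_all add: less_imp_le[OF mm_pos])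
  show "prod_density T gg ys \<le> pmf (pmf_list qs) ys" for ys
    unfolding pmf_pmf_list len(2) using gg bounded_privacy_loss.g_nonneg[OF trimmed]
    by (intro prod_density_mono)
  have "1 - (\<Prod>i<T. mm i) \<le> (\<Sum>i<T. 1 - mm i)"
    using mm mm_pos by (intro one_minus_prod_le_sum) (auto intro: less_imp_le)
  also have "\<dots> \<le> real T * \<delta>"
    using mm sum_mono[of "{..<T}" "\<lambda>i. 1 - mm i" "\<lambda>_. \<delta>"] by force
  moreover have "0 \<le> (\<Prod>i<T. mm i)"
    using mm_pos by (intro prod_nonneg) (simp add: less_imp_le)
  ultimately show "ennreal (1 - real T * \<delta>) \<le> total_mass (prod_density T (\<lambda>i y. mm i * pmf (pp i) y))"
    by (simp add: prod_density_mult_pmf ennreal_mult nn_integral_cmult total_mass_pmf ennreal_leI)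
qed (use mm \<open>0 < dl\<close> in simp_all)

end

lemma advanced_composition_bind_pmf_list:
  fixes ps qs :: "'a pmf list" and K :: "'a list \<Rightarrow> 'b pmf"
  assumes len: "length ps = T" "length qs = T" and "0 \<le> eps" "0 < dl"
    and pq: "\<And>i S. i < T \<Longrightarrow> measure_pmf.prob (ps ! i) S \<le> exp eps * measure_pmf.prob (qs ! i) S + \<delta>"
    and qp: "\<And>i S. i < T \<Longrightarrow> measure_pmf.prob (qs ! i) S \<le> exp eps * measure_pmf.prob (ps ! i) S + \<delta>"
  shows "measure_pmf.prob (bind_pmf (pmf_list ps) K) S
     \<le> exp (eps * (exp eps - 1) * real T + eps * sqrt (2 * real T * ln (1 / dl)))
         * measure_pmf.prob (bind_pmf (pmf_list qs) K) S + (dl + real T * \<delta>)"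
proof (cases "0 < T \<and> 1 \<le> \<delta>")
  case True
  then have "1 \<le> real T * \<delta>"
    using mult_mono[of 1 "real T" 1 \<delta>] by simp
  moreover have "measure_pmf.prob (bind_pmf (pmf_list ps) K) S \<le> 1"
    by simp
  ultimately show ?thesis
    using \<open>0 < dl\<close> by (smt (verit) exp_gt_zero measure_nonneg mult_nonneg_nonneg)
next
  case False
  then have "\<forall>i<T. \<exists>m p' g. bounded_privacy_loss eps m p' g \<and> 1 - \<delta> \<le> m \<and> m \<le> 1 \<and>
      (\<forall>y. m * pmf p' y \<le> pmf (ps ! i) y) \<and> (\<forall>y. g y \<le> pmf (qs ! i) y)"
    using exists_trimmed_subdistributions[OF \<open>0 \<le> eps\<close> _ pq qp] by auto
  then obtain mm pp gg where trimmed: "\<And>i. i < T \<Longrightarrow> bounded_privacy_loss eps (mm i) (pp i) (gg i)"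
    and mm: "\<And>i. i < T \<Longrightarrow> 1 - \<delta> \<le> mm i \<and> mm i \<le> 1"
    and pp: "\<And>i y. i < T \<Longrightarrow> mm i * pmf (pp i) y \<le> pmf (ps ! i) y"
    and gg: "\<And>i y. i < T \<Longrightarrow> gg i y \<le> pmf (qs ! i) y"
    by metis
  show ?thesis
    using prob_bind_pmf_list_le_by_trimming[OF trimmed len \<open>0 \<le> eps\<close> \<open>0 < dl\<close> mm pp gg, of K S]
    by simp
qed

lemma neighbours_sym: "neighbours X X' \<Longrightarrow> neighbours X' X"
  unfolding neighbours_def by metis

theorem lemma3p6:
  fixes R :: "nat \<Rightarrow> 'x \<Rightarrow> 'y list pmf" and n m T :: nat and eps delta delta' :: real
  assumes "eps \<ge> 0"
    and "\<And>t x. t < T \<Longrightarrow> set_pmf (R t x) \<subseteq> {ys. length ys = m}"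
    and "\<And>t. t < T \<Longrightarrow> shuffled_dp n (R t) eps delta"
    and "delta' > 0"
  shows "shuffled_dp n (compose_rand R T)
           (eps * (exp eps - 1) * real T + eps * sqrt (2 * real T * ln (1 / delta')))
           (delta' + real T * delta)"
  unfolding shuffled_dp_def diff_private_def
proof (intro allI impI)
  fix X X' :: "'x list" and S :: "'y list set"
  assume X: "length X = n" "neighbours X X'"
  then have X': "length X' = n" "neighbours X' X"
    by (auto simp: neighbours_def intro: neighbours_sym)
  have dp: "diff_private n (shuffled (R t)) eps delta" if "t < T" for t
    using assms(3)[OF that] by (simp add: shuffled_dp_def)
  show "measure_pmf.prob (shuffled (compose_rand R T) X) S
      \<le> exp (eps * (exp eps - 1) * real T + eps * sqrt (2 * real T * ln (1 / delta'))) *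
         measure_pmf.prob (shuffled (compose_rand R T) X') S + (delta' + real T * delta)"
    unfolding shuffled_compose_rand
    by (rule advanced_composition_bind_pmf_list)
       (use assms(1,4) dp X X' in \<open>auto simp: diff_private_def\<close>)
qed

end
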